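(* As formal power series in $y$, \[ \sum_{n\ge0}Q_n(x)y^n=\frac{2-y}{1-y-(x+1)y^2}+(1+x)y-1 . \]
   Context: For $n\ge1$ let $\Xi_n$ be the poset on $\{x_1,\dots,x_n\}$ whose cover relations are exactly: $x_2\prec x_1$, $x_3\prec x_2$, and for $3\le i\le n-1$, $x_i\prec x_{i+1}$ if $i$ is odd and $x_{i+1}\prec x_i$ if $i$ is even (so $x_1>x_2>x_3<x_4>x_5<\cdots$). A filter of a poset is an up-closed subset. The matchable Lucas cube $\Omega_n$ is the graph whose vertices are the filters of $\Xi_n$, two filters adjacent iff one is obtained from the other by deleting a single element; $\Omega_0$ is the one-vertex graph. $q_{n,k}$ denotes the number of induced subgraphs of $\Omega_n$ isomorphic to the $k$-dimensional hypercube, and $Q_n(x)=\sum_{k\ge0}q_{n,k}x^k$ is the cube polynomial of $\Omega_n$. *)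

theory Defs
  imports "HOL-Computational_Algebra.Formal_Power_Series"
begin

text \<open>Element x_i of the poset Xi_n is represented by the natural number i, 1 \<le> i \<le> n.
  xi_cover n a b means x_a is covered by x_b (x_a \<prec> x_b).\<close>
definition xi_cover :: "nat \<Rightarrow> nat \<Rightarrow> nat \<Rightarrow> bool" where
  "xi_cover n a b \<longleftrightarrow>
     ((a = 2 \<and> b = 1 \<and> 2 \<le> n) \<or>
      (a = 3 \<and> b = 2 \<and> 3 \<le> n) \<or>
      (\<exists>i. 3 \<le> i \<and> i \<le> n - 1 \<and> i + 1 \<le> n \<and>
          ((odd i \<and> a = i \<and> b = i + 1) \<or> (even i \<and> a = i + 1 \<and> b = i))))"

definition xi_le :: "nat \<Rightarrow> nat \<Rightarrow> nat \<Rightarrow> bool" where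
  "xi_le n = (xi_cover n)\<^sup>*\<^sup>*"

definition xi_filters :: "nat \<Rightarrow> nat set set" where
  "xi_filters n = {F. F \<subseteq> {1..n} \<and> (\<forall>a\<in>F. \<forall>b\<in>{1..n}. xi_le n a b \<longrightarrow> b \<in> F)}"

definition omega_adj :: "nat set \<Rightarrow> nat set \<Rightarrow> bool" where
  "omega_adj F G \<longleftrightarrow> (\<exists>z\<in>F. G = F - {z}) \<or> (\<exists>z\<in>G. F = G - {z})"

text \<open>An induced subgraph is determined by its vertex set S.\<close>
definition q :: "nat \<Rightarrow> nat \<Rightarrow> nat" where
  "q n k = card {S. S \<subseteq> xi_filters n \<and>
     (\<exists>f. bij_betw f (Pow {..<k}) S \<and>
          (\<forall>A\<in>Pow {..<k}. \<forall>B\<in>Pow {..<k}.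
              omega_adj (f A) (f B) \<longleftrightarrow> card ((A - B) \<union> (B - A)) = 1))}"

definition cube_poly_eval :: "nat \<Rightarrow> real \<Rightarrow> real" where
  "cube_poly_eval n x = (\<Sum>k | q n k \<noteq> 0. real (q n k) * x ^ k)"

end

theory Submission
  imports Defs
begin

(* Adjacency in Omega_n means differing in one element, so an induced k-cube is an interval
   {F \<union> E | E \<subseteq> D} with |D| = k: after translating one vertex to the empty set, an
   embedding of Q_k is the image map of an injection, because two sets at distance two have
   only two common neighbours.  Such an interval consists of filters iff F is a filter and every
   element of D can be added to F on its own; hence Q_n(x) is the sum over all filters F of
   (1 + x) ^ a(F), where a(F) counts these addable elements.
   For n \<ge> 4 the element x_n is a leaf of the Hasse diagram of Xi_n hanging on x_(n-1), which is
   extremal in Xi_(n-1); splitting the filters by whether they contain x_n gives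
   Q_n = Q_(n-1) + (1 + x) Q_(n-2).  Reversing the order does not change the cube polynomial
   (complementation maps filters to filters of the dual order), so a maximal leaf suffices.
   As Xi_n is a chain for n \<le> 3, Q_n = 1 + n (1 + x) there, and the recurrence yields the
   generating function. *)

section \<open>Induced cubes in the graph of sets\<close>

lemma card_sym_diff_eq_1_iff:
  "card (sym_diff A B) = 1 \<longleftrightarrow> (\<exists>e. B = sym_diff A {e})"
proof
  assume "card (sym_diff A B) = 1"
  then obtain e where "sym_diff A B = {e}" by (auto simp: card_1_singleton_iff)
  then have "B = sym_diff A {e}" by blast
  then show "\<exists>e. B = sym_diff A {e}" ..
next
  assume "\<exists>e. B = sym_diff A {e}"
  then obtain e where "B = sym_diff A {e}" ..
  then have "sym_diff A B = {e}" by blast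
  then show "card (sym_diff A B) = 1" by simp
qed

lemma omega_adj_iff_card_sym_diff: "omega_adj F G \<longleftrightarrow> card (sym_diff F G) = 1"
  unfolding omega_adj_def card_sym_diff_eq_1_iff by blast

lemma common_neighbour_of_square:
  assumes "card (sym_diff Y (insert a C)) = 1" "card (sym_diff Y (insert b C)) = 1"
    and "a \<noteq> b" "a \<notin> C" "b \<notin> C" "Y \<noteq> C"
  shows "Y = insert a (insert b C)"
proof -
  obtain e1 e2 where "insert a C = sym_diff Y {e1}" "insert b C = sym_diff Y {e2}"
    using assms(1,2) unfolding card_sym_diff_eq_1_iff by blast
  with assms(3-6) show ?thesis by (auto simp: set_eq_iff)
qed

lemma cube_embedding_eq_image:
  fixes k :: nat
  assumes inj: "inj_on g (Pow {..<k})" and g_empty: "g {} = {}"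
    and g_singleton: "\<And>i. i < k \<Longrightarrow> g {i} = {d i}" and inj_d: "inj_on d {..<k}"
    and adj: "\<And>A B. A \<subseteq> {..<k} \<Longrightarrow> B \<subseteq> {..<k} \<Longrightarrow>
      card (sym_diff (g A) (g B)) = 1 \<longleftrightarrow> card (sym_diff A B) = 1"
  shows "B \<subseteq> {..<k} \<Longrightarrow> g B = d ` B"
proof (induction "card B" arbitrary: B rule: less_induct)
  case less
  have "finite B" using less.prems by (rule finite_subset) simp
  consider "B = {}" | i where "B = {i}" | (two) i j where "i \<in> B" "j \<in> B" "i \<noteq> j"
    by (metis all_not_in_conv is_singletonI' is_singleton_the_elem)
  then show ?case
  proof cases
    case (two i j)
    define C where "C = B - {i, j}"
    have C_subset: "C \<subseteq> {..<k}" and ij: "i < k" "j < k"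
      using less.prems two by (auto simp: C_def)
    have "C \<subset> B" "insert i C \<subset> B" "insert j C \<subset> B"
      using two by (auto simp: C_def)
    then have "card C < card B" "card (insert i C) < card B" "card (insert j C) < card B"
      using \<open>finite B\<close> by (simp_all add: psubset_card_mono)
    then have IH: "g C = d ` C" "g (insert i C) = d ` insert i C" "g (insert j C) = d ` insert j C"
      using less.hyps C_subset ij by auto
    have d_notin: "d i \<notin> d ` C" "d j \<notin> d ` C" and "d i \<noteq> d j"
      using inj_d ij C_subset two by (auto simp: C_def inj_on_def)
    \<comment> \<open>g B is a common neighbour of g (B - {j}) and g (B - {i}) other than g (B - {i, j}).\<close>
    have "sym_diff B (insert i C) = {j}" "sym_diff B (insert j C) = {i}"
      using two by (auto simp: C_def)
    then have "card (sym_diff (g B) (g (insert i C))) = 1"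
      "card (sym_diff (g B) (g (insert j C))) = 1"
      using adj[of B "insert i C"] adj[of B "insert j C"] less.prems C_subset ij by auto
    moreover have "g B \<noteq> g C"
      using inj less.prems C_subset two by (auto simp: C_def inj_on_eq_iff)
    ultimately have "g B = insert (d i) (insert (d j) (d ` C))"
      using common_neighbour_of_square[of "g B" "d i" "d ` C" "d j"] IH d_notin \<open>d i \<noteq> d j\<close>
      by simp
    moreover have "B = insert i (insert j C)" using two by (auto simp: C_def)
    ultimately show ?thesis by simp
  qed (use g_empty g_singleton less.prems in auto)
qed

lemma cube_embedding_fixing_empty:
  fixes k :: nat
  assumes inj: "inj_on g (Pow {..<k})" and g_empty: "g {} = {}"
    and adj: "\<And>A B. A \<subseteq> {..<k} \<Longrightarrow> B \<subseteq> {..<k} \<Longrightarrow>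
      card (sym_diff (g A) (g B)) = 1 \<longleftrightarrow> card (sym_diff A B) = 1"
  obtains d where "inj_on d {..<k}" "\<And>B. B \<subseteq> {..<k} \<Longrightarrow> g B = d ` B"
proof -
  have "\<exists>e. g {i} = {e}" if "i < k" for i
    using adj[of "{}" "{i}"] that g_empty by (simp add: card_1_singleton_iff)
  then obtain d where d: "\<And>i. i < k \<Longrightarrow> g {i} = {d i}" by metis
  have inj_d: "inj_on d {..<k}"
  proof (rule inj_onI)
    fix i j assume "i \<in> {..<k}" "j \<in> {..<k}" "d i = d j"
    then have "g {i} = g {j}" using d by simp
    with \<open>i \<in> {..<k}\<close> \<open>j \<in> {..<k}\<close> show "i = j" using inj by (auto dest: inj_onD)
  qed
  show ?thesis using that[OF inj_d cube_embedding_eq_image[OF inj g_empty d inj_d adj]] .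
qed

definition induced_cube :: "nat \<Rightarrow> 'a set set \<Rightarrow> bool" where
  "induced_cube k S \<longleftrightarrow> (\<exists>f. bij_betw f (Pow {..<k}) S \<and>
     (\<forall>A\<in>Pow {..<k}. \<forall>B\<in>Pow {..<k}.
        card (sym_diff (f A) (f B)) = 1 \<longleftrightarrow> card (sym_diff A B) = 1))"

lemma image_sym_diff_Pow:
  "(\<lambda>E. sym_diff X E) ` Pow D = (\<lambda>E. (X - D) \<union> E) ` Pow D"
proof (intro equalityI subsetI)
  fix Y assume "Y \<in> (\<lambda>E. sym_diff X E) ` Pow D"
  then obtain E where "E \<subseteq> D" "Y = sym_diff X E" by blast
  then have "Y = (X - D) \<union> sym_diff (X \<inter> D) E" "sym_diff (X \<inter> D) E \<in> Pow D" by auto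
  then show "Y \<in> (\<lambda>E. (X - D) \<union> E) ` Pow D" by (rule image_eqI)
next
  fix Y assume "Y \<in> (\<lambda>E. (X - D) \<union> E) ` Pow D"
  then obtain E where "E \<subseteq> D" "Y = (X - D) \<union> E" by blast
  then have "Y = sym_diff X (sym_diff (X \<inter> D) E)" "sym_diff (X \<inter> D) E \<in> Pow D" by auto
  then show "Y \<in> (\<lambda>E. sym_diff X E) ` Pow D" by (rule image_eqI)
qed

lemma induced_cube_imp_interval:
  assumes "induced_cube k S"
  obtains F D where "finite D" "card D = k" "F \<inter> D = {}" "S = (\<lambda>E. F \<union> E) ` Pow D"
proof -
  obtain f where bij: "bij_betw f (Pow {..<k}) S" and adj:
    "\<And>A B. A \<subseteq> {..<k} \<Longrightarrow> B \<subseteq> {..<k} \<Longrightarrow>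
      card (sym_diff (f A) (f B)) = 1 \<longleftrightarrow> card (sym_diff A B) = 1"
    using assms unfolding induced_cube_def by blast
  define X where "X = f {}"
  define g where "g A = sym_diff X (f A)" for A
  have inj_g: "inj_on g (Pow {..<k})"
    using bij unfolding g_def bij_betw_def inj_on_def by blast
  have g_empty: "g {} = {}" by (auto simp: g_def X_def)
  have "sym_diff (g A) (g B) = sym_diff (f A) (f B)" for A B
    unfolding g_def by blast
  with adj have adj_g: "\<And>A B. A \<subseteq> {..<k} \<Longrightarrow> B \<subseteq> {..<k} \<Longrightarrow>
      card (sym_diff (g A) (g B)) = 1 \<longleftrightarrow> card (sym_diff A B) = 1"
    by simp
  obtain d where inj_d: "inj_on d {..<k}" and g_d: "\<And>B. B \<subseteq> {..<k} \<Longrightarrow> g B = d ` B"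
    using cube_embedding_fixing_empty[OF inj_g g_empty adj_g] by blast
  define D where "D = d ` {..<k}"
  have "S = f ` Pow {..<k}" using bij by (simp add: bij_betw_def)
  also have "\<dots> = (\<lambda>B. sym_diff X (d ` B)) ` Pow {..<k}"
    using g_d by (intro image_cong refl) (auto simp: g_def)
  also have "\<dots> = (\<lambda>E. sym_diff X E) ` (image d ` Pow {..<k})"
    by (simp add: image_image)
  also have "\<dots> = (\<lambda>E. sym_diff X E) ` Pow D"
    by (simp only: image_Pow_surj[OF D_def[symmetric]])
  also have "\<dots> = (\<lambda>E. (X - D) \<union> E) ` Pow D" by (rule image_sym_diff_Pow)
  finally have "S = (\<lambda>E. (X - D) \<union> E) ` Pow D" .
  moreover have "finite D" "card D = k" using inj_d by (simp_all add: D_def card_image)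
  ultimately show ?thesis using that by blast
qed

lemma interval_imp_induced_cube:
  assumes "finite D" "card D = k" "F \<inter> D = {}"
  shows "induced_cube k ((\<lambda>E. F \<union> E) ` Pow D)"
proof -
  obtain g where g: "bij_betw g {..<k} D"
    using ex_bij_betw_nat_finite[OF assms(1)] assms(2) by (auto simp: atLeast0LessThan)
  define f where "f A = F \<union> g ` A" for A
  have "bij_betw (\<lambda>E. F \<union> E) (Pow D) ((\<lambda>E. F \<union> E) ` Pow D)"
  proof (rule bij_betw_imageI[OF inj_onI refl])
    fix E1 E2 assume "E1 \<in> Pow D" "E2 \<in> Pow D" "F \<union> E1 = F \<union> E2"
    with assms(3) show "E1 = E2" by blast
  qed
  then have "bij_betw f (Pow {..<k}) ((\<lambda>E. F \<union> E) ` Pow D)"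
    unfolding f_def using bij_betw_trans[OF bij_betw_image_Pow[OF g]] by (simp add: comp_def)
  moreover have "card (sym_diff (f A) (f B)) = card (sym_diff A B)"
    if "A \<subseteq> {..<k}" "B \<subseteq> {..<k}" for A B
  proof -
    have inj: "inj_on g (A \<union> B)"
      using that g by (auto simp: bij_betw_def intro: inj_on_subset)
    have "sym_diff (f A) (f B) = sym_diff (g ` A) (g ` B)"
      using that g assms(3) unfolding f_def bij_betw_def by blast
    also have "\<dots> = g ` sym_diff A B"
      using inj_on_image_set_diff[OF inj, of A B] inj_on_image_set_diff[OF inj, of B A]
      by (simp add: image_Un le_supI1 le_supI2)
    finally have "sym_diff (f A) (f B) = g ` sym_diff A B" .
    moreover have "inj_on g (sym_diff A B)"
      using inj by (rule inj_on_subset) blast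
    ultimately show ?thesis by (simp add: card_image)
  qed
  ultimately show ?thesis unfolding induced_cube_def by auto
qed

lemma interval_eq_iff:
  assumes "F \<inter> D = {}" "F' \<inter> D' = {}"
  shows "(\<lambda>E. F \<union> E) ` Pow D = (\<lambda>E. F' \<union> E) ` Pow D' \<longleftrightarrow> F = F' \<and> D = D'"
proof
  have bounds: "\<Inter> ((\<lambda>E. F \<union> E) ` Pow D) = F" "\<Union> ((\<lambda>E. F \<union> E) ` Pow D) = F \<union> D" for F D :: "'a set"
    by auto
  assume "(\<lambda>E. F \<union> E) ` Pow D = (\<lambda>E. F' \<union> E) ` Pow D'"
  then have "F = F'" "F \<union> D = F' \<union> D'" using bounds by metis+
  with assms show "F = F' \<and> D = D'" by blast
qed simp

lemma card_induced_cubes: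
  "card {S. S \<subseteq> \<F> \<and> induced_cube k S} =
     card {(F, D). F \<inter> D = {} \<and> finite D \<and> card D = k \<and> (\<lambda>E. F \<union> E) ` Pow D \<subseteq> \<F>}"
    (is "card ?cubes = card ?P")
proof -
  define interval where "interval = (\<lambda>(F, D). (\<lambda>E. F \<union> E) ` Pow (D :: 'a set))"
  have "?cubes \<subseteq> interval ` ?P"
  proof
    fix S assume "S \<in> ?cubes"
    then have "S \<subseteq> \<F>" "induced_cube k S" by simp_all
    obtain F D where FD: "finite D" "card D = k" "F \<inter> D = {}" "S = (\<lambda>E. F \<union> E) ` Pow D"
      using \<open>induced_cube k S\<close> by (rule induced_cube_imp_interval)
    with \<open>S \<subseteq> \<F>\<close> have "(F, D) \<in> ?P" by simp
    moreover have "S = interval (F, D)" using FD(4) by (simp add: interval_def)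
    ultimately show "S \<in> interval ` ?P" by blast
  qed
  moreover have "interval ` ?P \<subseteq> ?cubes"
  proof
    fix S assume "S \<in> interval ` ?P"
    then obtain F D where "(F, D) \<in> ?P" "S = (\<lambda>E. F \<union> E) ` Pow D"
      by (auto simp: interval_def)
    then show "S \<in> ?cubes" using interval_imp_induced_cube by blast
  qed
  ultimately have cubes_eq: "?cubes = interval ` ?P" by (rule subset_antisym)
  have "inj_on interval ?P"
  proof (rule inj_onI)
    fix p p' assume "p \<in> ?P" "p' \<in> ?P" "interval p = interval p'"
    then show "p = p'"
      by (cases p, cases p') (simp add: interval_def interval_eq_iff)
  qed
  then show ?thesis unfolding cubes_eq by (rule card_image)
qed

lemma induced_cube_dim_le:
  assumes "finite V" "S \<subseteq> Pow V" "induced_cube k S"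
  shows "k \<le> card V"
proof -
  obtain F D where "finite D" "card D = k" "S = (\<lambda>E. F \<union> E) ` Pow D"
    using induced_cube_imp_interval[OF assms(3)] by metis
  then have "D \<subseteq> V" using assms(2) by blast
  with \<open>card D = k\<close> show ?thesis using assms(1) by (metis card_mono)
qed

section \<open>Cubes in the graph of up-sets\<close>

definition up_sets :: "'a set \<Rightarrow> ('a \<Rightarrow> 'a \<Rightarrow> bool) \<Rightarrow> 'a set set" where
  "up_sets V R = {F. F \<subseteq> V \<and> (\<forall>a\<in>F. \<forall>b\<in>V. R a b \<longrightarrow> b \<in> F)}"

definition addable :: "'a set \<Rightarrow> ('a \<Rightarrow> 'a \<Rightarrow> bool) \<Rightarrow> 'a set \<Rightarrow> 'a set" where
  "addable V R F = {a \<in> V - F. \<forall>b\<in>V. R a b \<longrightarrow> b \<in> F}"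

lemma up_sets_subset_Pow: "up_sets V R \<subseteq> Pow V"
  by (auto simp: up_sets_def)

lemma finite_up_sets: "finite V \<Longrightarrow> finite (up_sets V R)"
  using up_sets_subset_Pow by (rule finite_subset) simp

lemma finite_addable: "finite V \<Longrightarrow> finite (addable V R F)"
  by (simp add: addable_def)

lemma card_addable_le: "finite V \<Longrightarrow> card (addable V R F) \<le> card V"
  by (rule card_mono) (auto simp: addable_def)

lemma up_sets_cong:
  "(\<And>a b. a \<in> V \<Longrightarrow> b \<in> V \<Longrightarrow> R a b \<longleftrightarrow> R' a b) \<Longrightarrow> up_sets V R = up_sets V R'"
  unfolding up_sets_def by blast

lemma up_sets_rtranclp:
  assumes "\<And>a b. R a b \<Longrightarrow> b \<in> V"
  shows "up_sets V R\<^sup>*\<^sup>* = up_sets V R"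
proof (intro equalityI subsetI)
  fix F assume "F \<in> up_sets V R\<^sup>*\<^sup>*"
  then show "F \<in> up_sets V R" by (auto simp: up_sets_def)
next
  fix F assume F: "F \<in> up_sets V R"
  have "b \<in> F" if "R\<^sup>*\<^sup>* a b" "a \<in> F" for a b
    using that(1)
  proof (induction rule: rtranclp_induct)
    case (step b c)
    then show ?case using F assms by (auto simp: up_sets_def)
  qed (rule that(2))
  with F show "F \<in> up_sets V R\<^sup>*\<^sup>*" by (auto simp: up_sets_def)
qed

lemma interval_subset_up_sets_iff:
  assumes "irreflp_on V R"
  shows "F \<inter> D = {} \<and> (\<lambda>E. F \<union> E) ` Pow D \<subseteq> up_sets V R \<longleftrightarrow>
    F \<in> up_sets V R \<and> D \<subseteq> addable V R F"
proof
  assume "F \<inter> D = {} \<and> (\<lambda>E. F \<union> E) ` Pow D \<subseteq> up_sets V R"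
  then have disj: "F \<inter> D = {}" and up: "\<And>E. E \<subseteq> D \<Longrightarrow> F \<union> E \<in> up_sets V R" by blast+
  have "F \<in> up_sets V R" using up[of "{}"] by simp
  moreover have "a \<in> addable V R F" if "a \<in> D" for a
  proof -
    have "F \<union> {a} \<in> up_sets V R" using up that by blast
    moreover have "\<not> R a a" using irreflp_onD[OF assms] calculation by (auto simp: up_sets_def)
    ultimately show ?thesis using disj that by (auto simp: up_sets_def addable_def)
  qed
  ultimately show "F \<in> up_sets V R \<and> D \<subseteq> addable V R F" by blast
next
  assume "F \<in> up_sets V R \<and> D \<subseteq> addable V R F"
  then show "F \<inter> D = {} \<and> (\<lambda>E. F \<union> E) ` Pow D \<subseteq> up_sets V R"
    by (fastforce simp: up_sets_def addable_def)
qed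

lemma card_induced_cubes_up_sets:
  assumes "finite V" "irreflp_on V R"
  shows "card {S. S \<subseteq> up_sets V R \<and> induced_cube k S} =
    (\<Sum>F\<in>up_sets V R. card (addable V R F) choose k)"
proof -
  let ?P = "{(F, D). F \<inter> D = {} \<and> finite D \<and> card D = k \<and> (\<lambda>E. F \<union> E) ` Pow D \<subseteq> up_sets V R}"
  let ?Q = "Sigma (up_sets V R) (\<lambda>F. {D. D \<subseteq> addable V R F \<and> card D = k})"
  have "(F, D) \<in> ?P \<longleftrightarrow> (F, D) \<in> ?Q" for F D
    using interval_subset_up_sets_iff[OF assms(2), of F D]
      finite_subset[OF _ finite_addable[OF assms(1)], of D R F] by auto
  then have "?P = ?Q" by (simp add: set_eq_iff split_paired_all)
  then show ?thesis
    using assms(1) by (simp add: card_induced_cubes finite_up_sets finite_addable n_subsets)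
qed

definition cube_poly :: "'a set \<Rightarrow> ('a \<Rightarrow> 'a \<Rightarrow> bool) \<Rightarrow> real \<Rightarrow> real" where
  "cube_poly V R x =
     (\<Sum>k\<le>card V. real (card {S. S \<subseteq> up_sets V R \<and> induced_cube k S}) * x ^ k)"

lemma sum_binomial_atMost:
  fixes x :: "'a :: comm_semiring_1"
  assumes "m \<le> n"
  shows "(\<Sum>k\<le>n. of_nat (m choose k) * x ^ k) = (1 + x) ^ m"
proof -
  have "(\<Sum>k\<le>n. of_nat (m choose k) * x ^ k) = (\<Sum>k\<le>m. of_nat (m choose k) * x ^ k)"
    using assms by (intro sum.mono_neutral_right) (auto simp: binomial_eq_0)
  also have "\<dots> = (x + 1) ^ m"
    by (simp add: binomial_ring)
  finally show ?thesis by (simp add: add.commute)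
qed

lemma cube_poly_eq_sum_addable:
  assumes "finite V" "irreflp_on V R"
  shows "cube_poly V R x = (\<Sum>F\<in>up_sets V R. (1 + x) ^ card (addable V R F))"
proof -
  have "cube_poly V R x =
      (\<Sum>k\<le>card V. \<Sum>F\<in>up_sets V R. real (card (addable V R F) choose k) * x ^ k)"
    unfolding cube_poly_def card_induced_cubes_up_sets[OF assms]
    by (simp add: sum_distrib_right)
  also have "\<dots> = (\<Sum>F\<in>up_sets V R. \<Sum>k\<le>card V. real (card (addable V R F) choose k) * x ^ k)"
    by (rule sum.swap)
  also have "\<dots> = (\<Sum>F\<in>up_sets V R. (1 + x) ^ card (addable V R F))"
    using card_addable_le[OF assms(1)] by (simp add: sum_binomial_atMost)
  finally show ?thesis .
qed

lemma Diff_in_up_sets_converse: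
  "F \<in> up_sets V R \<Longrightarrow> V - F \<in> up_sets V (\<lambda>a b. R b a)"
  by (auto simp: up_sets_def)

lemma induced_cube_complement:
  assumes "S \<subseteq> Pow V" "induced_cube k S"
  shows "induced_cube k ((\<lambda>F. V - F) ` S)"
proof -
  obtain f where f: "bij_betw f (Pow {..<k}) S" and adj:
    "\<forall>A\<in>Pow {..<k}. \<forall>B\<in>Pow {..<k}. card (sym_diff (f A) (f B)) = 1 \<longleftrightarrow> card (sym_diff A B) = 1"
    using assms(2) unfolding induced_cube_def by blast
  have "inj_on (\<lambda>F. V - F) S"
    using assms(1) by (auto intro!: inj_onI)
  then have "bij_betw ((\<lambda>F. V - F) \<circ> f) (Pow {..<k}) ((\<lambda>F. V - F) ` S)"
    using f by (intro bij_betw_trans) (auto simp: bij_betw_def)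
  moreover have "sym_diff (V - f A) (V - f B) = sym_diff (f A) (f B)" if "A \<subseteq> {..<k}" "B \<subseteq> {..<k}" for A B
    using f assms(1) that unfolding bij_betw_def by blast
  ultimately show ?thesis
    using adj unfolding induced_cube_def by (intro exI[of _ "(\<lambda>F. V - F) \<circ> f"]) simp
qed

lemma image_Diff_image_Diff:
  "S \<subseteq> Pow V \<Longrightarrow> (\<lambda>F. V - F) ` (\<lambda>F. V - F) ` S = S"
  by (auto simp: image_image double_diff)

lemma card_induced_cubes_le_converse:
  assumes "finite V"
  shows "card {S. S \<subseteq> up_sets V R \<and> induced_cube k S} \<le>
    card {S. S \<subseteq> up_sets V (\<lambda>a b. R b a) \<and> induced_cube k S}"
proof (rule card_inj_on_le)
  let ?compl = "image (\<lambda>F. V - F)"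
  show "inj_on ?compl {S. S \<subseteq> up_sets V R \<and> induced_cube k S}"
  proof (rule inj_onI)
    fix S S' assume "S \<in> {S. S \<subseteq> up_sets V R \<and> induced_cube k S}"
      "S' \<in> {S. S \<subseteq> up_sets V R \<and> induced_cube k S}" "?compl S = ?compl S'"
    then have "S \<subseteq> Pow V" "S' \<subseteq> Pow V" "?compl (?compl S) = ?compl (?compl S')"
      using up_sets_subset_Pow[of V R] by auto
    then show "S = S'" by (simp only: image_Diff_image_Diff)
  qed
  show "?compl ` {S. S \<subseteq> up_sets V R \<and> induced_cube k S} \<subseteq>
      {S. S \<subseteq> up_sets V (\<lambda>a b. R b a) \<and> induced_cube k S}"
  proof (rule image_subsetI)
    fix S assume "S \<in> {S. S \<subseteq> up_sets V R \<and> induced_cube k S}"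
    then have "S \<subseteq> up_sets V R" "S \<subseteq> Pow V" "induced_cube k S"
      using up_sets_subset_Pow[of V R] by auto
    then show "?compl S \<in> {S. S \<subseteq> up_sets V (\<lambda>a b. R b a) \<and> induced_cube k S}"
      using Diff_in_up_sets_converse induced_cube_complement by blast
  qed
  show "finite {S. S \<subseteq> up_sets V (\<lambda>a b. R b a) \<and> induced_cube k S}"
    using finite_up_sets[OF assms] by simp
qed

lemma cube_poly_converse:
  assumes "finite V"
  shows "cube_poly V (\<lambda>a b. R b a) x = cube_poly V R x"
proof -
  have "card {S. S \<subseteq> up_sets V (\<lambda>a b. R b a) \<and> induced_cube k S} =
      card {S. S \<subseteq> up_sets V R \<and> induced_cube k S}" for k
    using card_induced_cubes_le_converse[OF assms, of R k]
      card_induced_cubes_le_converse[OF assms, of "\<lambda>a b. R b a" k]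
    by simp
  then show ?thesis by (simp add: cube_poly_def)
qed

section \<open>Adding a pendant element\<close>

lemma addable_insert_insert:
  "z \<notin> V \<Longrightarrow> addable (insert z V) R (insert z G) = addable V R G"
  by (auto simp: addable_def)

context
  fixes V :: "'a set" and R :: "'a \<Rightarrow> 'a \<Rightarrow> bool" and y z :: 'a
  assumes z_notin: "z \<notin> V"
    and pendant: "R y z" "\<And>a. a \<in> V \<Longrightarrow> R a z \<Longrightarrow> a = y"
    and z_maximal: "\<And>b. b \<in> insert z V \<Longrightarrow> \<not> R z b"
    and y_minimal: "\<And>a. a \<in> V \<Longrightarrow> \<not> R a y"
begin

lemma up_sets_insert_pendant:
  "up_sets (insert z V) R = insert z ` up_sets V R \<union> up_sets (V - {y}) R"
proof (intro equalityI subsetI)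
  fix F assume F: "F \<in> up_sets (insert z V) R"
  show "F \<in> insert z ` up_sets V R \<union> up_sets (V - {y}) R"
  proof (cases "z \<in> F")
    case True
    have "F - {z} \<in> up_sets V R"
      using F z_notin by (auto simp: up_sets_def)
    moreover have "F = insert z (F - {z})" using True by blast
    ultimately show ?thesis by blast
  next
    case False
    then have "y \<notin> F" using F pendant(1) by (auto simp: up_sets_def)
    with False F have "F \<in> up_sets (V - {y}) R" by (auto simp: up_sets_def)
    then show ?thesis by blast
  qed
next
  fix F assume "F \<in> insert z ` up_sets V R \<union> up_sets (V - {y}) R"
  then consider G where "G \<in> up_sets V R" "F = insert z G" | "F \<in> up_sets (V - {y}) R"
    by blast
  then show "F \<in> up_sets (insert z V) R"
  proof cases
    case 1
    then show ?thesis using z_maximal by (auto simp: up_sets_def)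
  next
    case 2
    then have F: "F \<subseteq> V - {y}" "\<And>a b. a \<in> F \<Longrightarrow> b \<in> V - {y} \<Longrightarrow> R a b \<Longrightarrow> b \<in> F"
      by (auto simp: up_sets_def)
    have "b \<in> F" if "a \<in> F" "b \<in> insert z V" "R a b" for a b
    proof -
      have "a \<in> V" "a \<noteq> y" using F(1) that(1) by auto
      then have "b \<noteq> z" "b \<noteq> y" using pendant(2) y_minimal that(3) by blast+
      then show ?thesis using F(2) that by blast
    qed
    with F(1) show ?thesis by (auto simp: up_sets_def)
  qed
qed

lemma addable_insert_pendant:
  assumes "H \<in> up_sets (V - {y}) R"
  shows "addable (insert z V) R H = insert z (addable (V - {y}) R H)"
proof (rule set_eqI)
  fix a
  have "H \<subseteq> V - {y}" using assms by (simp add: up_sets_def)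
  consider "a = z" | "a = y" | "a \<in> V - {y}" | "a \<notin> insert z V" by blast
  then show "a \<in> addable (insert z V) R H \<longleftrightarrow> a \<in> insert z (addable (V - {y}) R H)"
  proof cases
    case 1
    then show ?thesis using z_maximal z_notin \<open>H \<subseteq> V - {y}\<close> by (auto simp: addable_def)
  next
    case 2
    moreover have "y \<noteq> z" using pendant(1) z_maximal by blast
    ultimately show ?thesis using pendant(1) z_notin \<open>H \<subseteq> V - {y}\<close> by (auto simp: addable_def)
  next
    case 3
    then have "a \<noteq> z" "\<not> R a z" "\<not> R a y" using pendant(2) y_minimal z_notin by auto
    then show ?thesis using 3 by (auto simp: addable_def)
  qed (auto simp: addable_def)
qed

lemma cube_poly_insert_pendant:
  assumes "finite V" "irreflp_on V R"
  shows "cube_poly (insert z V) R x = cube_poly V R x + (1 + x) * cube_poly (V - {y}) R x"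
proof -
  let ?w = "\<lambda>V F. (1 + x) ^ card (addable V R F)"
  have irrefl: "irreflp_on (insert z V) R" "irreflp_on (V - {y}) R"
    using assms(2) z_maximal by (auto simp: irreflp_on_def)
  have "inj_on (insert z) (up_sets V R)"
    using z_notin up_sets_subset_Pow[of V R] by (intro inj_onI) (metis PowD insert_ident subsetD)
  moreover have "insert z ` up_sets V R \<inter> up_sets (V - {y}) R = {}"
    using z_notin up_sets_subset_Pow[of "V - {y}" R] by blast
  ultimately have "cube_poly (insert z V) R x =
      (\<Sum>G\<in>up_sets V R. ?w (insert z V) (insert z G)) + (\<Sum>H\<in>up_sets (V - {y}) R. ?w (insert z V) H)"
    using assms(1) irrefl(1)
    by (simp add: cube_poly_eq_sum_addable up_sets_insert_pendant sum.union_disjoint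
        finite_up_sets sum.reindex)
  also have "\<dots> = (\<Sum>G\<in>up_sets V R. ?w V G) + (\<Sum>H\<in>up_sets (V - {y}) R. (1 + x) * ?w (V - {y}) H)"
  proof -
    have "z \<notin> addable (V - {y}) R H" for H using z_notin by (simp add: addable_def)
    then have "?w (insert z V) H = (1 + x) * ?w (V - {y}) H" if "H \<in> up_sets (V - {y}) R" for H
      using addable_insert_pendant[OF that] finite_addable[of "V - {y}" R H] assms(1) by simp
    then show ?thesis using addable_insert_insert[OF z_notin] by simp
  qed
  also have "\<dots> = cube_poly V R x + (1 + x) * cube_poly (V - {y}) R x"
    using assms irrefl(2) by (simp add: cube_poly_eq_sum_addable sum_distrib_left)
  finally show ?thesis .
qed

end

section \<open>The posets Xi_n\<close>

definition zigzag_cover :: "nat \<Rightarrow> nat \<Rightarrow> bool" where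
  "zigzag_cover a b \<longleftrightarrow>
     (a = 2 \<and> b = 1) \<or> (a = 3 \<and> b = 2) \<or> (3 \<le> a \<and> odd a \<and> b = a + 1) \<or> (4 \<le> b \<and> even b \<and> a = b + 1)"

lemma xi_cover_iff: "xi_cover n a b \<longleftrightarrow> zigzag_cover a b \<and> a \<le> n \<and> b \<le> n"
proof
  assume "xi_cover n a b"
  then show "zigzag_cover a b \<and> a \<le> n \<and> b \<le> n"
    unfolding xi_cover_def zigzag_cover_def by (elim disjE exE) presburger+
next
  assume "zigzag_cover a b \<and> a \<le> n \<and> b \<le> n"
  then show "xi_cover n a b"
    unfolding xi_cover_def zigzag_cover_def by (elim conjE disjE) (auto intro: exI[of _ a] exI[of _ b])
qed

lemma irreflp_on_zigzag_cover: "irreflp_on V zigzag_cover"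
  by (simp add: irreflp_on_def zigzag_cover_def)

lemma xi_filters_eq_up_sets: "xi_filters n = up_sets {1..n} zigzag_cover"
proof -
  have "xi_filters n = up_sets {1..n} (xi_cover n)\<^sup>*\<^sup>*"
    unfolding xi_filters_def xi_le_def up_sets_def by blast
  also have "\<dots> = up_sets {1..n} (xi_cover n)"
    by (rule up_sets_rtranclp) (auto simp: xi_cover_iff zigzag_cover_def)
  also have "\<dots> = up_sets {1..n} zigzag_cover"
    by (rule up_sets_cong) (simp add: xi_cover_iff)
  finally show ?thesis .
qed

lemma q_eq_card_induced_cubes: "q n k = card {S. S \<subseteq> up_sets {1..n} zigzag_cover \<and> induced_cube k S}"
  unfolding q_def induced_cube_def omega_adj_iff_card_sym_diff xi_filters_eq_up_sets ..

lemma cube_poly_eval_eq_cube_poly_zigzag: "cube_poly_eval n x = cube_poly {1..n} zigzag_cover x"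
proof -
  have "q n k = 0" if "n < k" for k
  proof -
    have "\<not> induced_cube k S" if "S \<subseteq> up_sets {1..n} zigzag_cover" for S
      using induced_cube_dim_le[of "{1..n}" S k] that up_sets_subset_Pow \<open>n < k\<close> by fastforce
    then have "{S. S \<subseteq> up_sets {1..n} zigzag_cover \<and> induced_cube k S} = {}" by auto
    then show ?thesis by (simp only: q_eq_card_induced_cubes card.empty)
  qed
  then have "{k. q n k \<noteq> 0} \<subseteq> {..n}" by (auto simp: not_less[symmetric])
  then have "cube_poly_eval n x = (\<Sum>k\<le>n. real (q n k) * x ^ k)"
    unfolding cube_poly_eval_def by (intro sum.mono_neutral_left) auto
  then show ?thesis by (simp add: cube_poly_def q_eq_card_induced_cubes)
qed

lemma cube_poly_cong:
  "(\<And>a b. a \<in> V \<Longrightarrow> b \<in> V \<Longrightarrow> R a b \<longleftrightarrow> R' a b) \<Longrightarrow> cube_poly V R x = cube_poly V R' x"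
  unfolding cube_poly_def by (simp cong: up_sets_cong)

lemma up_sets_chain: "up_sets {1..n} (\<lambda>a b. a = Suc b) = (\<lambda>i. {1..i}) ` {..n}"
proof (intro equalityI subsetI)
  fix F assume F: "F \<in> up_sets {1..n} (\<lambda>a b. a = Suc b)"
  have down: "{1..a} \<subseteq> F" if "a \<in> F" for a
    using that
  proof (induction a)
    case (Suc a)
    have "{1..a} \<subseteq> F"
    proof (cases "a = 0")
      case False
      then have "a \<in> F" using F Suc.prems by (auto simp: up_sets_def)
      then show ?thesis by (rule Suc.IH)
    qed simp
    moreover have "{1..Suc a} = insert (Suc a) {1..a}" by auto
    ultimately show ?case using Suc.prems by simp
  qed simp
  show "F \<in> (\<lambda>i. {1..i}) ` {..n}"
  proof (cases "F = {}")
    case True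
    then show ?thesis by (intro image_eqI[of _ _ 0]) simp_all
  next
    case False
    have "F \<subseteq> {1..n}" using F by (simp add: up_sets_def)
    then have "finite F" by (rule finite_subset) simp
    then have "Max F \<in> F" "\<And>a. a \<in> F \<Longrightarrow> a \<le> Max F" using False by simp_all
    have "F \<subseteq> {1..Max F}"
    proof
      fix a assume "a \<in> F"
      then show "a \<in> {1..Max F}" using \<open>F \<subseteq> {1..n}\<close> \<open>a \<in> F \<Longrightarrow> a \<le> Max F\<close> by auto
    qed
    then have "F = {1..Max F}" using down[OF \<open>Max F \<in> F\<close>] by (rule subset_antisym)
    moreover have "Max F \<le> n" using \<open>Max F \<in> F\<close> \<open>F \<subseteq> {1..n}\<close> by auto
    ultimately show ?thesis by (intro image_eqI[of _ _ "Max F"]) simp_all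
  qed
next
  fix F assume "F \<in> (\<lambda>i. {1..i}) ` {..n}"
  then show "F \<in> up_sets {1..n} (\<lambda>a b. a = Suc b)" by (auto simp: up_sets_def)
qed

lemma addable_chain:
  assumes "i \<le> n"
  shows "addable {1..n} (\<lambda>a b. a = Suc b) {1..i} = (if i < n then {Suc i} else {})"
proof -
  have "a = Suc i" if "a \<in> addable {1..n} (\<lambda>a b. a = Suc b) {1..i}" for a
  proof -
    have "i < a" "\<And>b. b \<in> {1..n} \<Longrightarrow> a = Suc b \<Longrightarrow> b \<le> i" and "a \<le> n"
      using that by (auto simp: addable_def)
    have "a - 1 \<le> i"
    proof (cases "2 \<le> a")
      case True
      then have "a - 1 \<in> {1..n}" "a = Suc (a - 1)" using \<open>a \<le> n\<close> by auto
      then show ?thesis using \<open>\<And>b. b \<in> {1..n} \<Longrightarrow> a = Suc b \<Longrightarrow> b \<le> i\<close> by blast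
    qed simp
    with \<open>i < a\<close> show ?thesis by simp
  qed
  then show ?thesis using assms by (auto simp: addable_def)
qed

lemma cube_poly_chain: "cube_poly {1..n} (\<lambda>a b. a = Suc b) x = 1 + n * (1 + x)"
proof -
  have "inj_on (\<lambda>i. {1..i}) {..n}"
    by (rule inj_onI) (metis card_atLeastAtMost diff_Suc_1)
  then have "cube_poly {1..n} (\<lambda>a b. a = Suc b) x =
      (\<Sum>i\<le>n. (1 + x) ^ card (addable {1..n} (\<lambda>a b. a = Suc b) {1..i}))"
    by (simp add: cube_poly_eq_sum_addable irreflp_on_def up_sets_chain sum.reindex del: One_nat_def)
  also have "\<dots> = (\<Sum>i\<le>n. (1 + x) ^ card (if i < n then {Suc i} else {}))"
    by (intro sum.cong refl) (simp add: addable_chain del: One_nat_def)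
  also have "\<dots> = (\<Sum>i<n. 1 + x) + 1"
    by (simp add: lessThan_Suc_atMost[symmetric])
  finally show ?thesis by simp
qed

lemma cube_poly_zigzag_le_3:
  assumes "n \<le> 3"
  shows "cube_poly {1..n} zigzag_cover x = 1 + n * (1 + x)"
proof -
  have "zigzag_cover a b \<longleftrightarrow> a = Suc b" if "a \<in> {1..n}" "b \<in> {1..n}" for a b
    using that assms unfolding zigzag_cover_def by auto
  then have "cube_poly {1..n} zigzag_cover x = cube_poly {1..n} (\<lambda>a b. a = Suc b) x"
    by (rule cube_poly_cong)
  then show ?thesis by (simp only: cube_poly_chain)
qed

lemma cube_poly_zigzag_rec:
  assumes "4 \<le> n"
  shows "cube_poly {1..n} zigzag_cover x =
    cube_poly {1..n - 1} zigzag_cover x + (1 + x) * cube_poly {1..n - 2} zigzag_cover x"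
proof -
  have sets: "{1..n} = insert n {1..n - 1}" "n \<notin> {1..n - 1}" "{1..n - 1} - {n - 1} = {1..n - 2}"
    using assms by auto
  show ?thesis
  proof (cases "even n")
    case True
    have "zigzag_cover (n - 1) n" "\<And>a. a \<in> {1..n - 1} \<Longrightarrow> zigzag_cover a n \<Longrightarrow> a = n - 1"
      "\<And>b. b \<in> insert n {1..n - 1} \<Longrightarrow> \<not> zigzag_cover n b"
      "\<And>a. a \<in> {1..n - 1} \<Longrightarrow> \<not> zigzag_cover a (n - 1)"
      using True assms unfolding zigzag_cover_def atLeastAtMost_iff insert_iff by presburger+
    from cube_poly_insert_pendant[OF sets(2) this finite_atLeastAtMost irreflp_on_zigzag_cover]
    show ?thesis unfolding sets .
  next
    case False
    have pendant: "zigzag_cover n (n - 1)" "\<And>a. a \<in> {1..n - 1} \<Longrightarrow> zigzag_cover n a \<Longrightarrow> a = n - 1"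
      "\<And>b. b \<in> insert n {1..n - 1} \<Longrightarrow> \<not> zigzag_cover b n"
      "\<And>a. a \<in> {1..n - 1} \<Longrightarrow> \<not> zigzag_cover (n - 1) a"
      using False assms unfolding zigzag_cover_def atLeastAtMost_iff insert_iff by presburger+
    have "irreflp_on {1..n - 1} (\<lambda>a b. zigzag_cover b a)"
      using irreflp_on_zigzag_cover by (simp add: irreflp_on_def)
    from cube_poly_insert_pendant[OF sets(2) pendant finite_atLeastAtMost this]
    have "cube_poly {1..n} (\<lambda>a b. zigzag_cover b a) x =
        cube_poly {1..n - 1} (\<lambda>a b. zigzag_cover b a) x
        + (1 + x) * cube_poly {1..n - 2} (\<lambda>a b. zigzag_cover b a) x"
      unfolding sets(1)[symmetric] sets(3) .
    moreover have "cube_poly {1..m} (\<lambda>a b. zigzag_cover b a) x = cube_poly {1..m} zigzag_cover x" for m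
      by (rule cube_poly_converse) simp
    ultimately show ?thesis by (simp only:)
  qed
qed

section \<open>The generating function\<close>

lemma Abs_fps_eq_of_recurrence:
  fixes a :: "nat \<Rightarrow> real" and x :: real
  assumes init: "a 0 = 1" "a 1 = 2 + x" "a 2 = 3 + 2 * x" "a 3 = 4 + 3 * x"
    and rec: "\<And>n. 4 \<le> n \<Longrightarrow> a n = a (n - 1) + (1 + x) * a (n - 2)"
  shows "Abs_fps a = (2 - fps_X) / (1 - fps_X - fps_const (x + 1) * fps_X ^ 2)
           + fps_const (1 + x) * fps_X - 1"
proof -
  \<comment> \<open>Changing a 0 and a 1 to 2 and 1 makes the recurrence hold from n = 2 on.\<close>
  define b where "b n = (if n = 0 then 2 else if n = 1 then 1 else a n)" for n
  define D :: "real fps" where "D = 1 - fps_X - fps_const (x + 1) * fps_X ^ 2"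
  have "Abs_fps b * D = 2 - fps_X"
  proof (rule fps_ext)
    fix n
    have "Abs_fps b * D = Abs_fps b - fps_X * Abs_fps b - fps_const (x + 1) * (fps_X ^ 2 * Abs_fps b)"
      unfolding D_def by (simp add: algebra_simps)
    then have lhs: "fps_nth (Abs_fps b * D) n =
        b n - (if n = 0 then 0 else b (n - 1)) - (x + 1) * (if n < 2 then 0 else b (n - 2))"
      by (simp add: fps_X_power_mult_nth)
    have rhs: "fps_nth (2 - fps_X :: real fps) n = (if n = 0 then 2 else if n = 1 then -1 else 0)"
      by (simp add: numeral_fps_const fps_X_def)
    consider "n = 0" | "n = 1" | "n = 2" | "n = 3" | "4 \<le> n" by linarith
    then have "b n - (if n = 0 then 0 else b (n - 1)) - (x + 1) * (if n < 2 then 0 else b (n - 2)) =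
        (if n = 0 then 2 else if n = 1 then -1 else 0)"
    proof cases
      case 5
      then have "b n = a n" "b (n - 1) = a (n - 1)" "b (n - 2) = a (n - 2)" by (simp_all add: b_def)
      then show ?thesis using rec[OF 5] 5 by (simp add: algebra_simps)
    qed (simp_all add: b_def init algebra_simps)
    then show "fps_nth (Abs_fps b * D) n = fps_nth (2 - fps_X :: real fps) n"
      unfolding lhs rhs .
  qed
  moreover have "fps_nth D 0 = 1" by (simp add: D_def)
  then have "D \<noteq> 0" by auto
  ultimately have "(2 - fps_X) / D = Abs_fps b"
    by (metis nonzero_mult_div_cancel_right)
  moreover have "Abs_fps a = Abs_fps b + fps_const (1 + x) * fps_X - 1"
    using init(1,2) by (intro fps_ext) (simp add: b_def fps_X_def)
  ultimately show ?thesis by (simp add: D_def)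
qed

theorem mainTheorem10:
  fixes x :: real
  shows "Abs_fps (\<lambda>n. cube_poly_eval n x) =
           (2 - fps_X) / (1 - fps_X - fps_const (x + 1) * fps_X ^ 2)
           + fps_const (1 + x) * fps_X - 1"
proof (rule Abs_fps_eq_of_recurrence)
  have small: "cube_poly_eval n x = 1 + n * (1 + x)" if "n \<le> 3" for n
    using cube_poly_zigzag_le_3[OF that] by (simp add: cube_poly_eval_eq_cube_poly_zigzag)
  show "cube_poly_eval 0 x = 1" "cube_poly_eval 1 x = 2 + x"
    "cube_poly_eval 2 x = 3 + 2 * x" "cube_poly_eval 3 x = 4 + 3 * x"
    using small[of 0] small[of 1] small[of 2] small[of 3] by (simp_all add: algebra_simps)
  show "cube_poly_eval n x = cube_poly_eval (n - 1) x + (1 + x) * cube_poly_eval (n - 2) x"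
    if "4 \<le> n" for n
    using cube_poly_zigzag_rec[OF that] by (simp add: cube_poly_eval_eq_cube_poly_zigzag)
qed

end
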